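(* (Stability 2.) Let $1\le m\le n$, $x^{(m)}=(x_1,\dots,x_{m-1})$, $y^{(n)}=(y_1,\dots,y_{n-1})$. Then (for either type) \[{_{r+1}\Phi_r}\left[\begin{matrix}a_1,\dots,a_{r+1}\\ b_1,\dots,b_r\end{matrix};q,t;(x^{(m)},0),(y^{(n)},0)\right]={_{r+2}\Phi_{r+1}}\left[\begin{matrix}t^{n-1},a_1,\dots,a_{r+1}\\ t^n,b_1,\dots,b_r\end{matrix};q,t;x^{(m)},ty^{(n)}\right],\] where the left series has parameters $(m,n)$ and the right series has parameters $(m-1,n-1)$.
   Context: Notation. $(b;q)_N=(1-b)\cdots(1-bq^{N-1})$, $(b;q)_{-N}=1/(bq^{-N};q)_N$, $(b;q)_\infty=\prod_{k\ge0}(1-bq^k)$. For a partition $\lambda$: $l(\lambda)$, $|\lambda|$, $n(\lambda)=\sum_i(i-1)\lambda_i$, $c'_\lambda(q,t)=\prod_{s\in\lambda}(1-q^{a(s)+1}t^{l(s)})$ ($a(s)=\lambda_i-j$, $l(s)=\lambda'_j-i$), $(b;q,t)_\lambda=\prod_{i\ge1}(bt^{1-i};q)_{\lambda_i}$. $P_\lambda(x;q,t)$ Macdonald polynomial. For $0\le m\le n$: $F(u;x,y;t)=\sum_{I\subseteq\{1,\dots,m\}}(-u)^{|I|}t^{\binom{|I|}{2}}\prod_{i\in I,\,j\notin I}\frac{tx_i-x_j}{x_i-x_j}\prod_{i\in I}\prod_{j=1}^n\frac{1-x_iy_j}{1-tx_iy_j}$; $V_{\lambda\mu}(u,z;q,t)$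 is $F(u;x^{-1},y;t)$ at $x_i=zq^{\lambda_i}t^{m-i}$, $y_j=q^{\mu_j}t^{n-j}$; Type I: $V_{\lambda\mu}(q,t)=V_{\lambda\mu}(1,1;q,t)$; Type II: $V_{\lambda\mu}(q,t)=q^{-|\lambda|}V_{\lambda\mu}(t^{n-m+1},1;q,t)$; $\Omega_{\lambda\mu}(q,t)=V_{\lambda\mu}(q,t)(qt^{m-1};q,t)_\lambda\prod_{i=1}^m\prod_{j=1}^n\frac{(qt^{j-i+m-n-1};q)_{\lambda_i-\mu_j}}{(qt^{j-i+m-n};q)_{\lambda_i-\mu_j}}$. The $\mathfrak{sl}_3$ series with parameters $(m,n)$: ${_{r+1}\Phi_r}[a;b;q,t;x,y]=\prod_{i=1}^m\frac{(x_i;q)_\infty}{(x_it^{m-n-1};q)_\infty}\sum_{\lambda,\mu}t^{n(\lambda)+n(\mu)}\frac{P_\lambda(x;q,t)P_\mu(y;q,t)}{c'_\lambda(q,t)c'_\mu(q,t)}\frac{(a_1,\dots,a_{r+1};q,t)_\mu}{(b_1,\dots,b_r;q,t)_\mu}\Omega_{\lambda\mu}(q,t)$, over $l(\lambda)\le m$, $l(\mu)\le n$, $\lambda_i\ge\mu_{i-m+n}$. Convergence assumed. *)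

theory Defs
  imports "HOL-Analysis.Analysis"
begin

text \<open>A partition with at most m parts is represented as a weakly decreasing
  list of naturals of length exactly m (padded with zeros); entry i (0-based)
  is lambda_(i+1).\<close>

definition is_part :: "nat \<Rightarrow> nat list \<Rightarrow> bool" where
  "is_part m lam \<longleftrightarrow> length lam = m \<and> (\<forall>i. Suc i < m \<longrightarrow> lam ! Suc i \<le> lam ! i)"

definition psize :: "nat list \<Rightarrow> nat" where
  "psize lam = sum_list lam"

definition nfun :: "nat list \<Rightarrow> nat" where
  "nfun lam = (\<Sum>i<length lam. i * lam ! i)"

text \<open>Boxes (i,j), 1-based, of the Young diagram.\<close>
definition boxes :: "nat list \<Rightarrow> (nat \<times> nat) set" where
  "boxes lam = {(i, j). 1 \<le> i \<and> i \<le> length lam \<and> 1 \<le> j \<and> j \<le> lam ! (i - 1)}"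

definition conjp :: "nat list \<Rightarrow> nat \<Rightarrow> nat" where
  "conjp lam j = card {i. i < length lam \<and> j \<le> lam ! i}"

definition arm :: "nat list \<Rightarrow> nat \<times> nat \<Rightarrow> nat" where
  "arm lam s = lam ! (fst s - 1) - snd s"

definition leg :: "nat list \<Rightarrow> nat \<times> nat \<Rightarrow> nat" where
  "leg lam s = conjp lam (snd s) - fst s"

definition cprime :: "nat list \<Rightarrow> complex \<Rightarrow> complex \<Rightarrow> complex" where
  "cprime lam q t = (\<Prod>s\<in>boxes lam. 1 - q ^ (arm lam s + 1) * t ^ leg lam s)"

definition qpoch :: "complex \<Rightarrow> complex \<Rightarrow> nat \<Rightarrow> complex" where
  "qpoch b q N = (\<Prod>k<N. 1 - b * q ^ k)"

definition qpoch_int :: "complex \<Rightarrow> complex \<Rightarrow> int \<Rightarrow> complex" where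
  "qpoch_int b q N = (if 0 \<le> N then qpoch b q (nat N)
                      else 1 / qpoch (b * q powi N) q (nat (- N)))"

definition qpoch_inf :: "complex \<Rightarrow> complex \<Rightarrow> complex" where
  "qpoch_inf b q = lim (\<lambda>N. qpoch b q N)"

definition qpoch_part :: "complex \<Rightarrow> complex \<Rightarrow> complex \<Rightarrow> nat list \<Rightarrow> complex" where
  "qpoch_part b q t lam = (\<Prod>i<length lam. qpoch (b * t powi (- int i)) q (lam ! i))"

section \<open>Macdonald polynomials (tableau formula, Macdonald VI (7.13'))\<close>

definition bfun :: "nat list \<Rightarrow> complex \<Rightarrow> complex \<Rightarrow> nat \<times> nat \<Rightarrow> complex" where
  "bfun lam q t s = (if s \<in> boxes lam then
      (1 - q ^ arm lam s * t ^ (leg lam s + 1)) / (1 - q ^ (arm lam s + 1) * t ^ leg lam s)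
     else 1)"

definition hstrip :: "nat list \<Rightarrow> nat list \<Rightarrow> bool" where
  "hstrip lam mu \<longleftrightarrow> length lam = length mu \<and>
     (\<forall>i < length lam. mu ! i \<le> lam ! i \<and> (Suc i < length lam \<longrightarrow> lam ! Suc i \<le> mu ! i))"

text \<open>psi_{lam/mu} = prod over s in R - C of b_mu(s)/b_lam(s), where R (resp. C) is the
  union of rows (resp. columns) meeting lam/mu (Macdonald VI (6.24)).\<close>
definition psi :: "nat list \<Rightarrow> nat list \<Rightarrow> complex \<Rightarrow> complex \<Rightarrow> complex" where
  "psi lam mu q t = (\<Prod>s \<in> {(i, j). (i, j) \<in> boxes mu \<and> mu ! (i - 1) < lam ! (i - 1) \<and>
        \<not> (\<exists>k < length lam. mu ! k < j \<and> j \<le> lam ! k)}.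
      bfun mu q t s / bfun lam q t s)"

text \<open>Semistandard tableaux of shape lam with entries in {1..m}, as chains
  0 = lam^(0) \<subseteq> ... \<subseteq> lam^(m) = lam of horizontal strips.\<close>
definition tableaux :: "nat \<Rightarrow> nat list \<Rightarrow> nat list list set" where
  "tableaux m lam = {cs. length cs = Suc m \<and> cs ! 0 = replicate m 0 \<and> cs ! m = lam \<and>
      (\<forall>i\<le>m. length (cs ! i) = m) \<and> (\<forall>i<m. hstrip (cs ! Suc i) (cs ! i))}"

definition macP :: "nat list \<Rightarrow> complex \<Rightarrow> complex \<Rightarrow> complex list \<Rightarrow> complex" where
  "macP lam q t x = (\<Sum>cs \<in> tableaux (length x) lam.
      \<Prod>i < length x. psi (cs ! Suc i) (cs ! i) q t *
                      (x ! i) ^ (psize (cs ! Suc i) - psize (cs ! i)))"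

definition Ffun :: "complex \<Rightarrow> complex list \<Rightarrow> complex list \<Rightarrow> complex \<Rightarrow> complex" where
  "Ffun u x y t = (\<Sum>I \<in> Pow {0..<length x}.
      (- u) ^ card I * t ^ (card I choose 2) *
      (\<Prod>i\<in>I. \<Prod>j\<in>{0..<length x} - I. (t * x ! i - x ! j) / (x ! i - x ! j)) *
      (\<Prod>i\<in>I. \<Prod>j<length y. (1 - x ! i * y ! j) / (1 - t * x ! i * y ! j)))"

definition Vz :: "complex \<Rightarrow> complex \<Rightarrow> nat list \<Rightarrow> nat list \<Rightarrow> complex \<Rightarrow> complex \<Rightarrow> complex" where
  "Vz u z lam mu q t = Ffun u
      (map (\<lambda>i. 1 / (z * q ^ (lam ! i) * t ^ (length lam - 1 - i))) [0..<length lam])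
      (map (\<lambda>j. q ^ (mu ! j) * t ^ (length mu - 1 - j)) [0..<length mu]) t"

text \<open>Value at z = 1, as a rational function of z (i.e. the limit z \<rightarrow> 1).\<close>
definition V1 :: "complex \<Rightarrow> nat list \<Rightarrow> nat list \<Rightarrow> complex \<Rightarrow> complex \<Rightarrow> complex" where
  "V1 u lam mu q t = Lim (at 1) (\<lambda>z. Vz u z lam mu q t)"

datatype vtype = TypeI | TypeII

definition Vfun :: "vtype \<Rightarrow> nat list \<Rightarrow> nat list \<Rightarrow> complex \<Rightarrow> complex \<Rightarrow> complex" where
  "Vfun ty lam mu q t = (case ty of
      TypeI \<Rightarrow> V1 1 lam mu q t
    | TypeII \<Rightarrow> q powi (- int (psize lam)) *
                V1 (t ^ (length mu - length lam + 1)) lam mu q t)"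

definition Omega :: "vtype \<Rightarrow> nat list \<Rightarrow> nat list \<Rightarrow> complex \<Rightarrow> complex \<Rightarrow> complex" where
  "Omega ty lam mu q t = (let m = int (length lam); n = int (length mu) in
     Vfun ty lam mu q t * qpoch_part (q * t powi (m - 1)) q t lam *
     (\<Prod>i<length lam. \<Prod>j<length mu.
        qpoch_int (q * t powi (int j - int i + m - n - 1)) q (int (lam ! i) - int (mu ! j)) /
        qpoch_int (q * t powi (int j - int i + m - n)) q (int (lam ! i) - int (mu ! j))))"

definition Phi_index :: "nat \<Rightarrow> nat \<Rightarrow> (nat list \<times> nat list) set" where
  "Phi_index m n = {(lam, mu). is_part m lam \<and> is_part n mu \<and>
      (\<forall>i<m. mu ! (i + n - m) \<le> lam ! i)}"

definition Phi_term :: "vtype \<Rightarrow> complex list \<Rightarrow> complex list \<Rightarrow> complex \<Rightarrow> complex \<Rightarrow>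
    complex list \<Rightarrow> complex list \<Rightarrow> nat list \<times> nat list \<Rightarrow> complex" where
  "Phi_term ty a b q t x y p = (case p of (lam, mu) \<Rightarrow>
      t ^ (nfun lam + nfun mu) * macP lam q t x * macP mu q t y /
        (cprime lam q t * cprime mu q t) *
      (\<Prod>k<length a. qpoch_part (a ! k) q t mu) / (\<Prod>k<length b. qpoch_part (b ! k) q t mu) *
      Omega ty lam mu q t)"

definition Phi :: "vtype \<Rightarrow> complex list \<Rightarrow> complex list \<Rightarrow> complex \<Rightarrow> complex \<Rightarrow>
    complex list \<Rightarrow> complex list \<Rightarrow> complex" where
  "Phi ty a b q t x y = (let m = length x; n = length y in
      (\<Prod>i<m. qpoch_inf (x ! i) q / qpoch_inf (x ! i * t powi (int m - int n - 1)) q) *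
      infsum (Phi_term ty a b q t x y) (Phi_index m n))"

end

theory Submission
  imports Defs
begin

(*
  Write (m, n) for the parameters of the left-hand side, so that x_m = y_n = 0.  In the tableau
  expansion P_lambda(x, 0) vanishes unless the last letter is unused, so only the pairs
  (lambda 0, mu 0) survive, with P_(lambda 0)(x, 0) = P_lambda(x); by homogeneity
  P_mu(t y) = t^|mu| P_mu(y); and c', n(-) and (a; q, t)_mu ignore trailing zeros.
  It remains to see that Omega acquires exactly the factor
  t^|mu| (t^(n-1); q, t)_mu / (t^n; q, t)_mu.  In its double product the new row i = m
  consists of q-Pochhammer symbols of negative length, whose reversal produces this factor, and
  the new column j = n cancels the change of (q t^(m-1); q, t)_lambda.  Finally V does not change:
  as z -> 1 the summands of F containing the new variable x_m tend to 0, while the others acquire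
  factors tending to 1.  Genericity of q and t keeps all denominators away from 0 and makes
  these limits exist.
*)

lemma qpoch_0 [simp]: "qpoch b q 0 = 1"
  by (simp add: qpoch_def)

lemma qpoch_int_of_nat [simp]: "qpoch_int b q (int N) = qpoch b q N"
  by (simp add: qpoch_int_def)

lemma qpoch_int_minus: "qpoch_int b q (- int N) = 1 / qpoch (b * q powi (- int N)) q N"
  by (cases "N = 0") (auto simp: qpoch_int_def qpoch_def)

lemma qpoch_reverse:
  assumes q: "q \<noteq> 0" and c: "c \<noteq> 0"
  shows "qpoch (q * c * q powi (- int N)) q N = (\<Prod>k<N. - c * q powi (- int k)) * qpoch (1 / c) q N"
proof -
  have "qpoch (q * c * q powi (- int N)) q N = (\<Prod>k<N. 1 - q * c * q powi (- int N) * q ^ (N - Suc k))"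
    unfolding qpoch_def by (rule prod.nat_diff_reindex[symmetric])
  also have "\<dots> = (\<Prod>k<N. (- c * q powi (- int k)) * (1 - 1 / c * q ^ k))"
  proof (rule prod.cong[OF refl])
    fix k assume "k \<in> {..<N}"
    then obtain d where N: "N = Suc (k + d)" using less_imp_Suc_add by blast
    have "q * q powi (- int N) * q ^ (N - Suc k) = q powi (- int k)"
      using q unfolding power_int_minus power_int_of_nat by (simp add: N power_add field_simps)
    then show "1 - q * c * q powi (- int N) * q ^ (N - Suc k) = (- c * q powi (- int k)) * (1 - 1 / c * q ^ k)"
      using q c by (simp add: power_int_minus field_simps)
  qed
  also have "\<dots> = (\<Prod>k<N. - c * q powi (- int k)) * qpoch (1 / c) q N"
    unfolding qpoch_def prod.distrib by simp
  finally show ?thesis .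
qed

lemma qpoch_int_minus_ratio:
  assumes q: "q \<noteq> 0" and t: "t \<noteq> 0" and c: "c \<noteq> 0"
  shows "qpoch_int (q * c) q (- int N) / qpoch_int (q * (t * c)) q (- int N) =
         t ^ N * qpoch (1 / (t * c)) q N / qpoch (1 / c) q N"
proof -
  define P where "P = (\<Prod>k<N. - c * q powi (- int k))"
  have "(\<Prod>k<N. - (t * c) * q powi (- int k)) = (\<Prod>k<N. t * (- c * q powi (- int k)))"
    by (simp add: mult.assoc)
  also have "\<dots> = t ^ N * P"
    unfolding prod.distrib P_def by simp
  moreover have "P \<noteq> 0" using q c by (simp add: P_def)
  ultimately show ?thesis
    using qpoch_reverse[OF q c, of N] qpoch_reverse[OF q, of "t * c" N] q t c
    by (simp add: qpoch_int_minus P_def mult.assoc)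
qed

lemma qpoch_inf_0 [simp]: "qpoch_inf 0 q = 1"
  unfolding qpoch_inf_def qpoch_def by (simp add: limI)

lemma Phi_index_length: "(lam, mu) \<in> Phi_index m n \<Longrightarrow> length lam = m \<and> length mu = n"
  unfolding Phi_index_def is_part_def by auto

lemma is_part_antimono: "is_part m lam \<Longrightarrow> i \<le> j \<Longrightarrow> j < m \<Longrightarrow> lam ! j \<le> lam ! i"
proof (induction j)
  case (Suc j)
  then show ?case
    unfolding is_part_def by (metis Suc_lessD le_Suc_eq le_trans order_refl)
qed simp

lemma Phi_index_append_zero:
  "(lam, mu) \<in> Phi_index m n \<Longrightarrow> (lam @ [0], mu @ [0]) \<in> Phi_index (Suc m) (Suc n)"
  unfolding Phi_index_def is_part_def by (auto simp: nth_append less_Suc_eq)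

lemma append_butlast_zero: "length l = Suc m \<Longrightarrow> l ! m = 0 \<Longrightarrow> l = butlast l @ [0]"
  by (metis append_butlast_last_id diff_Suc_1 last_conv_nth list.size(3) nat.distinct(1))

lemma Phi_index_Suc_butlast:
  assumes idx: "(lam, mu) \<in> Phi_index (Suc m) (Suc n)" and "m \<le> n" and "lam ! m = 0" "mu ! n = 0"
  shows "(butlast lam, butlast mu) \<in> Phi_index m n \<and> lam = butlast lam @ [0] \<and> mu = butlast mu @ [0]"
proof -
  have len: "length lam = Suc m" "length mu = Suc n" using Phi_index_length[OF idx] by auto
  have "butlast mu ! (i + n - m) \<le> butlast lam ! i" if "i < m" for i
  proof -
    have "i + n - m < n" using that \<open>m \<le> n\<close> by simp
    then show ?thesis using idx that len by (auto simp: Phi_index_def nth_butlast)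
  qed
  then have "(butlast lam, butlast mu) \<in> Phi_index m n"
    using idx by (auto simp: Phi_index_def is_part_def nth_butlast)
  moreover have "lam = butlast lam @ [0]" "mu = butlast mu @ [0]"
    using len assms(3,4) by (simp_all add: append_butlast_zero)
  ultimately show ?thesis by blast
qed

lemma psize_eq_sum: "psize mu = (\<Sum>j<length mu. mu ! j)"
  by (simp add: psize_def sum_list_sum_nth atLeast0LessThan)

lemma boxes_append_zero: "boxes (lam @ [0]) = boxes lam"
  unfolding boxes_def by (auto simp: nth_append le_Suc_eq split: if_splits)

lemma conjp_append_zero: "0 < j \<Longrightarrow> conjp (lam @ [0]) j = conjp lam j"
  unfolding conjp_def by (rule arg_cong[where f = card]) (auto simp: nth_append less_Suc_eq)

lemma arm_append_zero: "s \<in> boxes lam \<Longrightarrow> arm (lam @ [0]) s = arm lam s"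
  by (auto simp: arm_def boxes_def nth_append)

lemma leg_append_zero: "s \<in> boxes lam \<Longrightarrow> leg (lam @ [0]) s = leg lam s"
  by (auto simp: leg_def boxes_def conjp_append_zero)

lemma cprime_append_zero: "cprime (lam @ [0]) q t = cprime lam q t"
  unfolding cprime_def boxes_append_zero by (simp add: arm_append_zero leg_append_zero)

lemma nfun_append_zero: "nfun (lam @ [0]) = nfun lam"
  unfolding nfun_def by (simp add: nth_append)

lemma psize_append_zero: "psize (lam @ [0]) = psize lam"
  by (simp add: psize_def)

lemma qpoch_part_append_zero: "qpoch_part b q t (mu @ [0]) = qpoch_part b q t mu"
  unfolding qpoch_part_def by (simp add: nth_append)

section \<open>Macdonald polynomials at a vanishing last variable\<close>

lemma bfun_append_zero: "bfun (lam @ [0]) q t s = bfun lam q t s"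
  unfolding bfun_def boxes_append_zero by (simp add: arm_append_zero leg_append_zero)

lemma psi_append_zero:
  assumes "length lam = length mu"
  shows "psi (lam @ [0]) (mu @ [0]) q t = psi lam mu q t"
proof -
  have "{(i, j). (i, j) \<in> boxes (mu @ [0]) \<and> (mu @ [0]) ! (i - 1) < (lam @ [0]) ! (i - 1) \<and>
          \<not> (\<exists>k < length (lam @ [0]). (mu @ [0]) ! k < j \<and> j \<le> (lam @ [0]) ! k)} =
        {(i, j). (i, j) \<in> boxes mu \<and> mu ! (i - 1) < lam ! (i - 1) \<and>
          \<not> (\<exists>k < length lam. mu ! k < j \<and> j \<le> lam ! k)}"
    using assms unfolding boxes_append_zero by (auto simp: boxes_def nth_append less_Suc_eq)
  then show ?thesis unfolding psi_def bfun_append_zero by simp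
qed

lemma psi_refl: "psi lam lam q t = 1"
  unfolding psi_def by simp

lemma hstrip_append_zero:
  "length lam = length mu \<Longrightarrow> hstrip (lam @ [0]) (mu @ [0]) \<longleftrightarrow> hstrip lam mu"
  unfolding hstrip_def by (auto simp: nth_append less_Suc_eq)

lemma hstrip_length: "hstrip lam mu \<Longrightarrow> length mu = length lam"
  unfolding hstrip_def by auto

lemma hstrip_nth_le: "hstrip lam mu \<Longrightarrow> i < length lam \<Longrightarrow> mu ! i \<le> lam ! i"
  unfolding hstrip_def by auto

lemma hstrip_psize_le: "hstrip lam mu \<Longrightarrow> psize mu \<le> psize lam"
  unfolding psize_eq_sum by (auto simp: hstrip_length hstrip_nth_le intro!: sum_mono)

lemma hstrip_psize_eq:
  assumes strip: "hstrip lam mu" and "psize mu = psize lam"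
  shows "mu = lam"
proof (rule ccontr)
  assume "mu \<noteq> lam"
  with hstrip_length[OF strip] obtain i where i: "i < length lam" "mu ! i \<noteq> lam ! i"
    by (metis nth_equalityI)
  then have "(\<Sum>j<length lam. mu ! j) < (\<Sum>j<length lam. lam ! j)"
    using hstrip_nth_le[OF strip] by (intro sum_strict_mono_ex1) (auto simp: order_less_le)
  with \<open>psize mu = psize lam\<close> show False
    unfolding psize_eq_sum hstrip_length[OF strip] by simp
qed

lemma tableauxD:
  assumes "cs \<in> tableaux M lam"
  shows "length cs = Suc M" "cs ! 0 = replicate M 0" "cs ! M = lam"
    "\<And>i. i \<le> M \<Longrightarrow> length (cs ! i) = M" "\<And>i. i < M \<Longrightarrow> hstrip (cs ! Suc i) (cs ! i)"
  using assms unfolding tableaux_def by auto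

lemma tableau_nth_eq_0:
  assumes cs: "cs \<in> tableaux M lam"
  shows "i \<le> k \<Longrightarrow> k < M \<Longrightarrow> cs ! i ! k = 0"
proof (induction i arbitrary: k)
  case 0
  then show ?case using tableauxD(2)[OF cs] by simp
next
  case (Suc i)
  have "hstrip (cs ! Suc i) (cs ! i)" "length (cs ! Suc i) = M"
    using tableauxD(4,5)[OF cs] Suc.prems by auto
  then have adjacent: "\<forall>j. Suc j < M \<longrightarrow> cs ! Suc i ! Suc j \<le> cs ! i ! j"
    unfolding hstrip_def by auto
  have "cs ! Suc i ! Suc (k - 1) \<le> cs ! i ! (k - 1)"
    using spec[OF adjacent, of "k - 1"] Suc.prems by simp
  then show ?case using Suc by simp
qed

lemma tableau_nth_le:
  assumes cs: "cs \<in> tableaux M lam" and "k < M"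
  shows "i \<le> M \<Longrightarrow> cs ! i ! k \<le> lam ! k"
proof (induction i rule: inc_induct)
  case base
  then show ?case using tableauxD(3)[OF cs] by simp
next
  case (step i)
  then have "cs ! i ! k \<le> cs ! Suc i ! k"
    using hstrip_nth_le[OF tableauxD(5)[OF cs]] tableauxD(4)[OF cs] \<open>k < M\<close> by simp
  then show ?case using step by simp
qed

lemma finite_tableaux: "finite (tableaux M lam)"
proof -
  define B where "B = {l. set l \<subseteq> {0..psize lam} \<and> length l = M}"
  have "tableaux M lam \<subseteq> {cs. set cs \<subseteq> B \<and> length cs = Suc M}"
  proof safe
    fix cs assume cs: "cs \<in> tableaux M lam"
    have "length lam = M" using tableauxD(3,4)[OF cs] by force
    then have "lam ! k \<le> psize lam" if "k < M" for k
      using that unfolding psize_def by (simp add: member_le_sum_list)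
    then have "cs ! i ! k \<le> psize lam" if "i \<le> M" "k < M" for i k
      using tableau_nth_le[OF cs] that le_trans by blast
    then show "length cs = Suc M" "\<And>l. l \<in> set cs \<Longrightarrow> l \<in> B"
      using tableauxD(1,4)[OF cs] by (fastforce simp: B_def in_set_conv_nth)+
  qed
  moreover have "finite B" unfolding B_def by (intro finite_lists_length_eq) auto
  ultimately show ?thesis by (metis finite_lists_length_eq finite_subset)
qed

lemma tableau_psize_increments:
  assumes cs: "cs \<in> tableaux M lam"
  shows "(\<Sum>i<M. psize (cs ! Suc i) - psize (cs ! i)) = psize lam"
proof -
  have "int (\<Sum>i<M. psize (cs ! Suc i) - psize (cs ! i)) = (\<Sum>i<M. int (psize (cs ! Suc i)) - int (psize (cs ! i)))"
    using hstrip_psize_le[OF tableauxD(5)[OF cs]] by (simp add: of_nat_diff)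
  also have "\<dots> = int (psize (cs ! M)) - int (psize (cs ! 0))"
    by (rule sum_lessThan_telescope)
  also have "\<dots> = int (psize lam)"
    using tableauxD(2,3)[OF cs] by (simp add: psize_def)
  finally show ?thesis by (simp only: of_nat_eq_iff)
qed

definition tableau_weight :: "complex \<Rightarrow> complex \<Rightarrow> complex list \<Rightarrow> nat list list \<Rightarrow> complex" where
  "tableau_weight q t x cs =
     (\<Prod>i<length x. psi (cs ! Suc i) (cs ! i) q t * x ! i ^ (psize (cs ! Suc i) - psize (cs ! i)))"

lemma macP_eq_sum_tableau_weight: "macP lam q t x = (\<Sum>cs\<in>tableaux (length x) lam. tableau_weight q t x cs)"
  by (simp add: macP_def tableau_weight_def)

lemma macP_map_mult: "macP mu q t (map (\<lambda>v. c * v) ys) = c ^ psize mu * macP mu q t ys"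
  unfolding macP_eq_sum_tableau_weight length_map sum_distrib_left
proof (rule sum.cong[OF refl])
  fix cs assume cs: "cs \<in> tableaux (length ys) mu"
  have "tableau_weight q t (map (\<lambda>v. c * v) ys) cs =
        (\<Prod>i<length ys. c ^ (psize (cs ! Suc i) - psize (cs ! i))) * tableau_weight q t ys cs"
    unfolding tableau_weight_def prod.distrib[symmetric] by (simp add: power_mult_distrib mult_ac)
  also have "(\<Prod>i<length ys. c ^ (psize (cs ! Suc i) - psize (cs ! i))) = c ^ psize mu"
    by (simp add: power_sum[symmetric] tableau_psize_increments[OF cs])
  finally show "tableau_weight q t (map (\<lambda>v. c * v) ys) cs = c ^ psize mu * tableau_weight q t ys cs" .
qed

lemma tableau_weight_append_zero_eq_0:
  assumes cs: "cs \<in> tableaux (Suc m) lam" and "cs ! m \<noteq> lam" and "length xs = m"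
  shows "tableau_weight q t (xs @ [0]) cs = 0"
proof -
  have strip: "hstrip lam (cs ! m)" using tableauxD(3)[OF cs] tableauxD(5)[OF cs, of m] by simp
  then have "psize (cs ! m) < psize lam"
    using hstrip_psize_le hstrip_psize_eq \<open>cs ! m \<noteq> lam\<close> by (metis le_neq_implies_less)
  then show ?thesis
    using \<open>length xs = m\<close> tableauxD(3)[OF cs] by (simp add: tableau_weight_def nth_append)
qed

lemma macP_append_zero_eq_0:
  assumes "length xs = m" and "lam ! m \<noteq> 0"
  shows "macP lam q t (xs @ [0]) = 0"
  unfolding macP_eq_sum_tableau_weight
proof (rule sum.neutral, rule ballI)
  fix cs assume "cs \<in> tableaux (length (xs @ [0])) lam"
  then have cs: "cs \<in> tableaux (Suc m) lam" using assms by simp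
  then have "cs ! m \<noteq> lam" using tableau_nth_eq_0[OF cs, of m m] assms by auto
  then show "tableau_weight q t (xs @ [0]) cs = 0"
    using tableau_weight_append_zero_eq_0[OF cs] assms by simp
qed

definition pad_tableau :: "nat list \<Rightarrow> nat list list \<Rightarrow> nat list list" where
  "pad_tableau lam ds = map (\<lambda>l. l @ [0]) ds @ [lam @ [0]]"

lemma pad_tableau_nth:
  assumes "ds \<in> tableaux m lam"
  shows "i \<le> m \<Longrightarrow> pad_tableau lam ds ! i = ds ! i @ [0]"
    and "pad_tableau lam ds ! Suc m = lam @ [0]" "length (pad_tableau lam ds) = Suc (Suc m)"
  using tableauxD(1)[OF assms] by (auto simp: pad_tableau_def nth_append)

lemma pad_tableau_in_tableaux:
  assumes ds: "ds \<in> tableaux m lam" and part: "is_part (Suc m) (lam @ [0])"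
  shows "pad_tableau lam ds \<in> tableaux (Suc m) (lam @ [0])"
proof -
  have "hstrip (lam @ [0]) (lam @ [0])"
    using part unfolding hstrip_def is_part_def by auto
  then have "hstrip (pad_tableau lam ds ! Suc i) (pad_tableau lam ds ! i)" if "i < Suc m" for i
    using that pad_tableau_nth[OF ds] tableauxD(3-5)[OF ds] hstrip_append_zero
    by (cases "i = m") (auto simp: less_Suc_eq)
  moreover have "length (pad_tableau lam ds ! i) = Suc m" if "i \<le> Suc m" for i
    using that pad_tableau_nth[OF ds] tableauxD(3,4)[OF ds] by (cases "i = Suc m") auto
  ultimately show ?thesis
    using pad_tableau_nth[OF ds] tableauxD(2,3)[OF ds]
    by (simp add: tableaux_def replicate_append_same)
qed

lemma inj_on_pad_tableau: "inj_on (pad_tableau lam) (tableaux m lam)"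
  by (rule inj_onI) (simp add: pad_tableau_def inj_map_eq_map inj_def)

lemma tableau_weight_pad_tableau:
  assumes ds: "ds \<in> tableaux m lam" and "length xs = m"
  shows "tableau_weight q t (xs @ [0]) (pad_tableau lam ds) = tableau_weight q t xs ds"
proof -
  have "psi (pad_tableau lam ds ! Suc i) (pad_tableau lam ds ! i) q t *
          (xs @ [0]) ! i ^ (psize (pad_tableau lam ds ! Suc i) - psize (pad_tableau lam ds ! i)) =
        psi (ds ! Suc i) (ds ! i) q t * xs ! i ^ (psize (ds ! Suc i) - psize (ds ! i))" if "i < m" for i
    using that assms pad_tableau_nth[OF ds] tableauxD(4)[OF ds]
    by (simp add: psi_append_zero psize_append_zero nth_append)
  moreover have "pad_tableau lam ds ! m = pad_tableau lam ds ! Suc m"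
    using pad_tableau_nth[OF ds] tableauxD(3)[OF ds] by simp
  ultimately show ?thesis
    using assms by (simp add: tableau_weight_def psi_refl)
qed

lemma tableaux_last_row_in_pad_image:
  assumes cs: "cs \<in> tableaux (Suc m) (lam @ [0])" and last: "cs ! m = lam @ [0]"
    and "length lam = m"
  shows "cs \<in> pad_tableau lam ` tableaux m lam"
proof -
  have rows: "cs ! i = butlast (cs ! i) @ [0]" if "i \<le> m" for i
    using that tableauxD(4)[OF cs, of i] tableau_nth_eq_0[OF cs, of i m]
    by (intro append_butlast_zero) auto
  define ds where "ds = map butlast (take (Suc m) cs)"
  have ds_nth: "ds ! i = butlast (cs ! i)" if "i \<le> m" for i
    using that tableauxD(1)[OF cs] by (simp add: ds_def)
  have "ds \<in> tableaux m lam"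
  proof -
    have "hstrip (ds ! Suc i) (ds ! i)" if "i < m" for i
    proof -
      have "hstrip (butlast (cs ! Suc i) @ [0]) (butlast (cs ! i) @ [0])"
        using that tableauxD(5)[OF cs, of i] rows[of i] rows[of "Suc i"] by simp
      moreover have "length (butlast (cs ! Suc i)) = length (butlast (cs ! i))"
        using that tableauxD(4)[OF cs] by simp
      ultimately show ?thesis using that hstrip_append_zero ds_nth by simp
    qed
    moreover have "ds ! 0 = replicate m 0"
      using tableauxD(2)[OF cs] ds_nth[of 0] by (simp add: replicate_append_same[symmetric])
    ultimately show ?thesis
      using ds_nth tableauxD(1,4)[OF cs] last by (simp add: tableaux_def ds_def)
  qed
  moreover have "pad_tableau lam ds = cs"
  proof (rule nth_equalityI)
    show "length (pad_tableau lam ds) = length cs"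
      using pad_tableau_nth(3)[OF \<open>ds \<in> tableaux m lam\<close>] tableauxD(1)[OF cs] by simp
    show "pad_tableau lam ds ! i = cs ! i" if "i < length (pad_tableau lam ds)" for i
      using that pad_tableau_nth[OF \<open>ds \<in> tableaux m lam\<close>] tableauxD(3)[OF cs] ds_nth rows
      by (cases "i = Suc m") (auto simp: less_Suc_eq_le)
  qed
  ultimately show ?thesis by blast
qed

lemma macP_append_zero:
  assumes xs: "length xs = m" and lam: "length lam = m" and part: "is_part (Suc m) (lam @ [0])"
  shows "macP (lam @ [0]) q t (xs @ [0]) = macP lam q t xs"
proof -
  have "macP (lam @ [0]) q t (xs @ [0]) = (\<Sum>cs\<in>tableaux (Suc m) (lam @ [0]). tableau_weight q t (xs @ [0]) cs)"
    using xs by (simp add: macP_eq_sum_tableau_weight)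
  also have "\<dots> = (\<Sum>cs\<in>pad_tableau lam ` tableaux m lam. tableau_weight q t (xs @ [0]) cs)"
  proof (rule sum.mono_neutral_right)
    show "pad_tableau lam ` tableaux m lam \<subseteq> tableaux (Suc m) (lam @ [0])"
      using pad_tableau_in_tableaux[OF _ part] by blast
    show "\<forall>cs\<in>tableaux (Suc m) (lam @ [0]) - pad_tableau lam ` tableaux m lam.
            tableau_weight q t (xs @ [0]) cs = 0"
      using tableaux_last_row_in_pad_image[OF _ _ lam] tableau_weight_append_zero_eq_0[OF _ _ xs] by blast
  qed (rule finite_tableaux)
  also have "\<dots> = (\<Sum>ds\<in>tableaux m lam. tableau_weight q t xs ds)"
    by (simp add: sum.reindex[OF inj_on_pad_tableau] tableau_weight_pad_tableau xs)
  also have "\<dots> = macP lam q t xs"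
    using xs by (simp add: macP_eq_sum_tableau_weight)
  finally show ?thesis .
qed

section \<open>The limit \<open>z \<rightarrow> 1\<close> defining \<open>V\<close>\<close>

lemma eventually_at_1_nonzero: "\<forall>\<^sub>F z in at (1::complex). z \<noteq> 0 \<and> z \<noteq> 1"
proof -
  have "\<forall>\<^sub>F z in at (1::complex). z \<in> - {0} - {1}"
    by (rule eventually_at_in_open) auto
  then show ?thesis by (rule eventually_mono) auto
qed

lemma prod_ratio_limit_at_1:
  fixes c :: "nat \<Rightarrow> complex"
  assumes t1: "t \<noteq> 1" and inj: "inj_on c {..<n}"
    and pole_cancelled: "\<forall>j<n. t * c j = 1 \<longrightarrow> 0 < j \<and> c (j - 1) = 1"
  shows "\<exists>L. ((\<lambda>z. \<Prod>j<n. (1 - c j / z) / (1 - t * c j / z)) \<longlongrightarrow> L) (at 1) \<and>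
             ((\<exists>j<n. c j = 1) \<and> (\<forall>j<n. t * c j \<noteq> 1) \<longrightarrow> L = 0)"
proof (cases "\<forall>j<n. t * c j \<noteq> 1")
  case True
  then have "((\<lambda>z. \<Prod>j<n. (1 - c j / z) / (1 - t * c j / z)) \<longlongrightarrow>
               (\<Prod>j<n. (1 - c j / 1) / (1 - t * c j / 1))) (at 1)"
    by (intro tendsto_intros) auto
  moreover have "(\<exists>j<n. c j = 1) \<and> (\<forall>j<n. t * c j \<noteq> 1) \<longrightarrow>
                   (\<Prod>j<n. (1 - c j / 1) / (1 - t * c j / 1)) = 0"
    by auto
  ultimately show ?thesis by (intro exI conjI) assumption+
next
  case False
  then obtain p where p: "p < n" "t * c p = 1" by auto
  with pole_cancelled have p_pos: "0 < p" and c_prev: "c (p - 1) = 1" by auto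
  have no_other_pole: "t * c j \<noteq> 1" if "j < n" "j \<noteq> p" for j
  proof
    assume "t * c j = 1"
    then have "c j = c p" using p by (metis mult_left_cancel zero_neq_one mult_zero_left)
    with inj p that show False by (auto dest: inj_onD)
  qed
  define f where "f = (\<lambda>z j. (1 - c j / z) / (1 - t * c j / z))"
  define S where "S = {..<n} - {p - 1, p}"
  have "{..<n} = insert p (insert (p - 1) S)" "p \<notin> insert (p - 1) S" "p - 1 \<notin> S" "finite S"
    using p p_pos by (auto simp: S_def)
  then have split: "(\<Prod>j<n. f z j) = f z p * f z (p - 1) * (\<Prod>j\<in>S. f z j)" for z
    by (simp add: mult.assoc)
  \<comment> \<open>the zero of factor \<open>p - 1\<close> cancels the pole of factor \<open>p\<close> at \<open>z = 1\<close>\<close>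
  have cancel: "f z p * f z (p - 1) = (1 - c p / z) / (1 - t / z)" if "z \<noteq> 0" "z \<noteq> 1" for z
  proof -
    have "f z p = (1 - c p / z) / (1 - 1 / z)" unfolding f_def using p(2)
      by (metis times_divide_eq_right)
    moreover have "f z (p - 1) = (1 - 1 / z) / (1 - t / z)" unfolding f_def c_prev by simp
    moreover have "1 - 1 / z \<noteq> 0" using that by (auto simp: field_simps)
    ultimately show ?thesis by simp
  qed
  have "\<forall>\<^sub>F z in at 1. (1 - c p / z) / (1 - t / z) * (\<Prod>j\<in>S. f z j) = (\<Prod>j<n. f z j)"
    using eventually_at_1_nonzero by eventually_elim (metis split cancel)
  moreover have "((\<lambda>z. (1 - c p / z) / (1 - t / z) * (\<Prod>j\<in>S. f z j)) \<longlongrightarrow>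
                   (1 - c p / 1) / (1 - t / 1) * (\<Prod>j\<in>S. f 1 j)) (at 1)"
    unfolding f_def using no_other_pole t1 by (intro tendsto_intros) (auto simp: S_def)
  ultimately show ?thesis
    using False unfolding f_def by (blast intro: Lim_transform_eventually)
qed

locale generic_qt =
  fixes q t :: complex
  assumes q_nonzero: "q \<noteq> 0" and t_nonzero: "t \<noteq> 0"
    and generic: "\<forall>i j :: int. q powi i * t powi j = 1 \<longrightarrow> i = 0 \<and> j = 0"
begin

lemma monomial_eq_iff: "q ^ a * t ^ b = q ^ c * t ^ d \<longleftrightarrow> a = c \<and> b = d"
proof
  assume "q ^ a * t ^ b = q ^ c * t ^ d"
  then have "q powi (int a - int c) * t powi (int b - int d) = 1"
    using q_nonzero t_nonzero by (simp add: power_int_diff field_simps)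
  then have "int a - int c = 0 \<and> int b - int d = 0"
    by (rule generic[rule_format])
  then show "a = c \<and> b = d" by simp
qed simp

lemma monomial_eq_1_iff: "q ^ a * t ^ b = 1 \<longleftrightarrow> a = 0 \<and> b = 0"
  using monomial_eq_iff[of a b 0 0] by simp

lemma t_neq_1: "t \<noteq> 1"
  using monomial_eq_1_iff[of 0 1] by auto

text \<open>\<open>xvar\<close> is the reciprocal of the paper's \<open>x\<close>-variable (with 0-based indices), since \<open>V\<close>
  evaluates \<open>F(u; x\<^sup>-\<^sup>1, y; t)\<close>.\<close>

definition xvar :: "nat list \<Rightarrow> complex \<Rightarrow> nat \<Rightarrow> complex" where
  "xvar lam z i = 1 / (z * q ^ (lam ! i) * t ^ (length lam - 1 - i))"

definition yvar :: "nat list \<Rightarrow> nat \<Rightarrow> complex" where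
  "yvar mu j = q ^ (mu ! j) * t ^ (length mu - 1 - j)"

definition cauchy_factor :: "nat list \<Rightarrow> nat list \<Rightarrow> complex \<Rightarrow> nat \<Rightarrow> complex" where
  "cauchy_factor lam mu z i =
     (\<Prod>j<length mu. (1 - xvar lam z i * yvar mu j) / (1 - t * xvar lam z i * yvar mu j))"

definition interaction_factor :: "nat list \<Rightarrow> complex \<Rightarrow> nat set \<Rightarrow> complex" where
  "interaction_factor lam z I = (\<Prod>i\<in>I. \<Prod>j\<in>{0..<length lam} - I.
     (t * xvar lam z i - xvar lam z j) / (xvar lam z i - xvar lam z j))"

definition F_summand :: "complex \<Rightarrow> nat list \<Rightarrow> nat list \<Rightarrow> complex \<Rightarrow> nat set \<Rightarrow> complex" where
  "F_summand u lam mu z I = (- u) ^ card I * t ^ (card I choose 2) *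
     interaction_factor lam z I * (\<Prod>i\<in>I. cauchy_factor lam mu z i)"

lemma Vz_eq_sum_F_summand: "Vz u z lam mu q t = (\<Sum>I\<in>Pow {0..<length lam}. F_summand u lam mu z I)"
  unfolding Vz_def Ffun_def F_summand_def interaction_factor_def cauchy_factor_def
  by (intro sum.cong refl arg_cong2[where f = "(*)"] prod.cong) (auto simp: xvar_def yvar_def)

lemma xvar_eq_div: "xvar lam z i = xvar lam 1 i / z"
  by (simp add: xvar_def)

lemma cauchy_factor_pole_cancelled:
  assumes idx: "(lam, mu) \<in> Phi_index m n" and "m \<le> n" and i: "i < m" and j: "j < n"
    and pole: "t * (xvar lam 1 i * yvar mu j) = 1"
  shows "0 < j \<and> xvar lam 1 i * yvar mu (j - 1) = 1"
proof -
  have len: "length lam = m" "length mu = n" using Phi_index_length[OF idx] by auto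
  have mu_part: "is_part n mu" and interlace: "mu ! (i + n - m) \<le> lam ! i"
    using idx i by (auto simp: Phi_index_def)
  have "q ^ (mu ! j) * t ^ Suc (n - 1 - j) = q ^ (lam ! i) * t ^ (m - 1 - i)"
    using pole q_nonzero t_nonzero by (simp add: xvar_def yvar_def len field_simps)
  then have same_q: "mu ! j = lam ! i" and same_t: "Suc (n - 1 - j) = m - 1 - i"
    by (simp_all only: monomial_eq_iff)
  then have j_pos: "0 < j" and prev: "j - 1 = i + n - m" and exp: "n - 1 - (j - 1) = m - 1 - i"
    using \<open>m \<le> n\<close> i j by linarith+
  \<comment> \<open>interlacing squeezes \<open>\<mu>\<^sub>j \<le> \<mu>\<^sub>j\<^sub>-\<^sub>1 \<le> \<lambda>\<^sub>i = \<mu>\<^sub>j\<close>\<close>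
  have "mu ! (j - 1) = lam ! i"
    using interlace is_part_antimono[OF mu_part, of "j - 1" j] j same_q prev by simp
  then show ?thesis
    using j_pos exp q_nonzero t_nonzero by (simp add: xvar_def yvar_def len)
qed

lemma cauchy_factor_last_zero:
  assumes idx: "(lam, mu) \<in> Phi_index m n" and "m \<le> n" and last_zero: "lam ! i = 0" "Suc i = m"
  shows "xvar lam 1 i * yvar mu (n - 1) = 1" and "t * (xvar lam 1 i * yvar mu j) \<noteq> 1"
proof -
  have len: "length lam = m" "length mu = n" using Phi_index_length[OF idx] by auto
  have "mu ! (n - 1) \<le> lam ! i"
    using idx last_zero \<open>m \<le> n\<close> by (auto simp: Phi_index_def)
  then show "xvar lam 1 i * yvar mu (n - 1) = 1"
    using last_zero by (simp add: xvar_def yvar_def len)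
  have "q ^ (mu ! j) * t ^ Suc (n - 1 - j) \<noteq> 1"
    by (subst monomial_eq_1_iff) simp
  moreover have "q ^ (mu ! j) * t ^ Suc (n - 1 - j) = t * (xvar lam 1 i * yvar mu j)"
    using last_zero by (simp add: xvar_def yvar_def len mult.left_commute)
  ultimately show "t * (xvar lam 1 i * yvar mu j) \<noteq> 1" by argo
qed

lemma cauchy_factor_limit:
  assumes idx: "(lam, mu) \<in> Phi_index m n" and "m \<le> n" and i: "i < m"
  shows "\<exists>L. ((\<lambda>z. cauchy_factor lam mu z i) \<longlongrightarrow> L) (at 1) \<and> (lam ! i = 0 \<and> Suc i = m \<longrightarrow> L = 0)"
proof -
  have len: "length lam = m" "length mu = n" using Phi_index_length[OF idx] by auto
  define c where "c j = xvar lam 1 i * yvar mu j" for j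
  have factor_eq: "cauchy_factor lam mu z i = (\<Prod>j<n. (1 - c j / z) / (1 - t * c j / z))" for z
    unfolding cauchy_factor_def c_def len by (subst (1 2) xvar_eq_div) (simp add: mult_ac)
  have inj: "inj_on c {..<n}"
  proof (rule inj_onI)
    fix j k assume "j \<in> {..<n}" "k \<in> {..<n}" "c j = c k"
    moreover from \<open>c j = c k\<close> have "n - 1 - j = n - 1 - k"
      using q_nonzero t_nonzero by (simp add: c_def xvar_def yvar_def len monomial_eq_iff)
    ultimately show "j = k" by auto
  qed
  have "\<forall>j<n. t * c j = 1 \<longrightarrow> 0 < j \<and> c (j - 1) = 1"
    using cauchy_factor_pole_cancelled[OF idx \<open>m \<le> n\<close> i] by (simp add: c_def)
  from prod_ratio_limit_at_1[OF t_neq_1 inj this]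
  obtain L where lim: "((\<lambda>z. \<Prod>j<n. (1 - c j / z) / (1 - t * c j / z)) \<longlongrightarrow> L) (at 1)"
    and zero: "(\<exists>j<n. c j = 1) \<and> (\<forall>j<n. t * c j \<noteq> 1) \<longrightarrow> L = 0"
    by (elim exE conjE)
  have "L = 0" if "lam ! i = 0" "Suc i = m"
  proof -
    have "n - 1 < n" using that \<open>m \<le> n\<close> by simp
    then show "L = 0"
      using zero cauchy_factor_last_zero[OF idx \<open>m \<le> n\<close> that] unfolding c_def by blast
  qed
  then show ?thesis using lim unfolding factor_eq by (intro exI[of _ L]) simp
qed

lemma xvar_tendsto: "((\<lambda>z. xvar lam z i) \<longlongrightarrow> xvar lam 1 i) (at 1)"
  unfolding xvar_def using q_nonzero t_nonzero by (intro tendsto_intros) auto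

lemma interaction_factor_tendsto:
  assumes "I \<subseteq> {0..<length lam}"
  shows "((\<lambda>z. interaction_factor lam z I) \<longlongrightarrow> interaction_factor lam 1 I) (at 1)"
  unfolding interaction_factor_def
proof (intro tendsto_prod tendsto_divide tendsto_diff tendsto_mult tendsto_const xvar_tendsto)
  fix i j assume "i \<in> I" "j \<in> {0..<length lam} - I"
  with assms have "i < length lam" "j < length lam" "i \<noteq> j" by auto
  then show "xvar lam 1 i - xvar lam 1 j \<noteq> 0"
    using q_nonzero t_nonzero monomial_eq_iff by (auto simp: xvar_def)
qed

lemma F_summand_limit:
  assumes idx: "(lam, mu) \<in> Phi_index m n" and "m \<le> n" and I: "I \<subseteq> {0..<m}"
  shows "\<exists>L. ((\<lambda>z. F_summand u lam mu z I) \<longlongrightarrow> L) (at 1) \<and>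
             ((\<exists>i\<in>I. lam ! i = 0 \<and> Suc i = m) \<longrightarrow> L = 0)"
proof -
  obtain L where L: "\<And>i. i \<in> I \<Longrightarrow> ((\<lambda>z. cauchy_factor lam mu z i) \<longlongrightarrow> L i) (at 1) \<and>
                                   (lam ! i = 0 \<and> Suc i = m \<longrightarrow> L i = 0)"
    using bchoice[of I] cauchy_factor_limit[OF idx \<open>m \<le> n\<close>] I by (metis atLeastLessThan_iff subsetD)
  have "length lam = m" using Phi_index_length[OF idx] by simp
  then have "((\<lambda>z. F_summand u lam mu z I) \<longlongrightarrow>
      (- u) ^ card I * t ^ (card I choose 2) * interaction_factor lam 1 I * (\<Prod>i\<in>I. L i)) (at 1)"
    unfolding F_summand_def using I L
    by (intro tendsto_mult tendsto_const interaction_factor_tendsto tendsto_prod) auto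
  moreover have "(\<Prod>i\<in>I. L i) = 0" if "\<exists>i\<in>I. lam ! i = 0 \<and> Suc i = m"
    using that L I finite_subset by (metis finite_atLeastLessThan prod_zero_iff)
  ultimately show ?thesis by auto
qed

definition F_limit :: "complex \<Rightarrow> nat list \<Rightarrow> nat list \<Rightarrow> nat set \<Rightarrow> complex" where
  "F_limit u lam mu I = Lim (at 1) (\<lambda>z. F_summand u lam mu z I)"

lemma F_summand_tendsto_F_limit:
  assumes "(lam, mu) \<in> Phi_index m n" "m \<le> n" "I \<subseteq> {0..<m}"
  shows "((\<lambda>z. F_summand u lam mu z I) \<longlongrightarrow> F_limit u lam mu I) (at 1)"
  using F_summand_limit[OF assms] unfolding F_limit_def by (metis tendsto_Lim trivial_limit_at)

lemma F_limit_eq_0: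
  assumes "(lam, mu) \<in> Phi_index m n" "m \<le> n" "I \<subseteq> {0..<m}"
    and "i \<in> I" "lam ! i = 0" "Suc i = m"
  shows "F_limit u lam mu I = 0"
  using F_summand_limit[OF assms(1-3)] assms(4-6) unfolding F_limit_def
  by (metis tendsto_Lim trivial_limit_at)

lemma V1_eq_sum_F_limit:
  assumes "(lam, mu) \<in> Phi_index m n" "m \<le> n"
  shows "V1 u lam mu q t = (\<Sum>I\<in>Pow {0..<m}. F_limit u lam mu I)"
proof -
  have "length lam = m" using Phi_index_length[OF assms(1)] by simp
  then have "((\<lambda>z. Vz u z lam mu q t) \<longlongrightarrow> (\<Sum>I\<in>Pow {0..<m}. F_limit u lam mu I)) (at 1)"
    unfolding Vz_eq_sum_F_summand \<open>length lam = m\<close> using F_summand_tendsto_F_limit[OF assms]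
    by (intro tendsto_sum) auto
  then show ?thesis unfolding V1_def by (intro tendsto_Lim) auto
qed

lemma xvar_append_zero:
  assumes "i < length lam"
  shows "xvar (lam @ [0]) z i = xvar lam z i / t"
proof -
  have "length lam - i = Suc (length lam - Suc i)" using assms by simp
  then show ?thesis using assms by (simp add: xvar_def nth_append mult_ac)
qed

lemma xvar_append_zero_last: "xvar (lam @ [0]) z (length lam) = 1 / z"
  by (simp add: xvar_def)

lemma yvar_append_zero:
  assumes "j < length mu"
  shows "yvar (mu @ [0]) j = t * yvar mu j"
proof -
  have "length mu - j = Suc (length mu - Suc j)" using assms by simp
  then show ?thesis using assms by (simp add: yvar_def nth_append mult_ac)
qed

lemma yvar_append_zero_last: "yvar (mu @ [0]) (length mu) = 1"
  by (simp add: yvar_def)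

text \<open>The factors that the new variables \<open>x\<^sub>m = 1/z\<close> and \<open>y\<^sub>n = 1\<close> contribute to the summand of \<open>i\<close>,
  where \<open>w = xvar (lam @ [0]) z i\<close>.\<close>

definition append_zero_factor :: "complex \<Rightarrow> complex \<Rightarrow> complex" where
  "append_zero_factor z w = (t * w - 1 / z) / (w - 1 / z) * ((1 - w) / (1 - t * w))"

lemma F_summand_append_zero:
  assumes I: "I \<subseteq> {0..<length lam}"
  shows "F_summand u (lam @ [0]) (mu @ [0]) z I =
         F_summand u lam mu z I * (\<Prod>i\<in>I. append_zero_factor z (xvar (lam @ [0]) z i))"
proof -
  have rest: "{0..<length (lam @ [0])} - I = insert (length lam) ({0..<length lam} - I)"
    using I by auto
  have "(t * xvar (lam @ [0]) z i - xvar (lam @ [0]) z j) / (xvar (lam @ [0]) z i - xvar (lam @ [0]) z j) =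
        (t * xvar lam z i - xvar lam z j) / (xvar lam z i - xvar lam z j)"
    if "i < length lam" "j < length lam" for i j
    using that t_nonzero by (simp add: xvar_append_zero divide_simps)
  then have inter: "interaction_factor (lam @ [0]) z I = interaction_factor lam z I *
      (\<Prod>i\<in>I. (t * xvar (lam @ [0]) z i - 1 / z) / (xvar (lam @ [0]) z i - 1 / z))"
    using I unfolding interaction_factor_def rest prod.distrib[symmetric]
    by (intro prod.cong refl) (auto simp: xvar_append_zero_last subset_iff)
  have "cauchy_factor (lam @ [0]) (mu @ [0]) z i =
        cauchy_factor lam mu z i * ((1 - xvar (lam @ [0]) z i) / (1 - t * xvar (lam @ [0]) z i))"
    if "i < length lam" for i
    using that t_nonzero
    by (simp add: cauchy_factor_def xvar_append_zero yvar_append_zero yvar_append_zero_last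
        mult.assoc mult.left_commute)
  then have cauchy: "(\<Prod>i\<in>I. cauchy_factor (lam @ [0]) (mu @ [0]) z i) = (\<Prod>i\<in>I. cauchy_factor lam mu z i) *
      (\<Prod>i\<in>I. (1 - xvar (lam @ [0]) z i) / (1 - t * xvar (lam @ [0]) z i))"
    using I unfolding prod.distrib[symmetric] by (intro prod.cong refl) (auto simp: subset_iff)
  show ?thesis
    unfolding F_summand_def inter cauchy append_zero_factor_def prod.distrib by (simp add: mult_ac)
qed

lemma append_zero_factor_tendsto_1:
  assumes "(w \<longlongrightarrow> w1) (at 1)" "w1 \<noteq> 1" "t * w1 \<noteq> 1"
  shows "((\<lambda>z. append_zero_factor z (w z)) \<longlongrightarrow> 1) (at 1)"
proof -
  have "((\<lambda>z. append_zero_factor z (w z)) \<longlongrightarrow> append_zero_factor 1 w1) (at 1)"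
    unfolding append_zero_factor_def using assms by (intro tendsto_intros) auto
  moreover have "append_zero_factor 1 w1 = 1"
    using assms(2,3) by (simp add: append_zero_factor_def divide_simps) (simp add: algebra_simps)
  ultimately show ?thesis by simp
qed

lemma F_summand_append_zero_eventually_0:
  assumes I: "I \<subseteq> {0..<length lam}" and i: "i \<in> I" "lam ! i = 0" "Suc i = length lam"
  shows "\<forall>\<^sub>F z in at 1. F_summand u (lam @ [0]) (mu @ [0]) z I = 0"
  using eventually_at_1_nonzero
proof eventually_elim
  case (elim z)
  \<comment> \<open>here \<open>t w = 1/z\<close>, so the new interaction factor of \<open>i\<close> vanishes\<close>
  have "length lam - i = 1" using i by simp
  then have "append_zero_factor z (xvar (lam @ [0]) z i) = 0"
    using i elim t_nonzero by (simp add: append_zero_factor_def xvar_def nth_append)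
  then show ?case
    using i(1) I by (simp add: F_summand_append_zero finite_subset prod_zero_iff) blast
qed

lemma append_zero_factor_xvar_tendsto_1:
  assumes "i < length lam" "\<not> (lam ! i = 0 \<and> Suc i = length lam)"
  shows "((\<lambda>z. append_zero_factor z (xvar (lam @ [0]) z i)) \<longlongrightarrow> 1) (at 1)"
proof (rule append_zero_factor_tendsto_1[OF xvar_tendsto])
  have "\<not> (lam ! i = 0 \<and> length lam - i = 1)" using assms by auto
  then show "xvar (lam @ [0]) 1 i \<noteq> 1" "t * xvar (lam @ [0]) 1 i \<noteq> 1"
    using assms(1) q_nonzero t_nonzero monomial_eq_iff[of "lam ! i" "length lam - i" 0 0]
      monomial_eq_iff[of "lam ! i" "length lam - i" 0 1]
    by (auto simp: xvar_def nth_append field_simps Suc_diff_Suc)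
qed

lemma F_limit_append_zero:
  assumes idx: "(lam, mu) \<in> Phi_index m n" and "m \<le> n" and I: "I \<subseteq> {0..<m}"
  shows "F_limit u (lam @ [0]) (mu @ [0]) I = F_limit u lam mu I"
proof -
  have len: "length lam = m" using Phi_index_length[OF idx] by simp
  have lim: "((\<lambda>z. F_summand u lam mu z I) \<longlongrightarrow> F_limit u lam mu I) (at 1)"
    using F_summand_tendsto_F_limit[OF assms] .
  have "((\<lambda>z. F_summand u (lam @ [0]) (mu @ [0]) z I) \<longlongrightarrow> F_limit u lam mu I) (at 1)"
  proof (cases "\<exists>i\<in>I. lam ! i = 0 \<and> Suc i = m")
    case True
    then obtain i where i: "i \<in> I" "lam ! i = 0" "Suc i = m" by blast
    then have "F_limit u lam mu I = 0" using F_limit_eq_0[OF assms] by blast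
    then show ?thesis
      using F_summand_append_zero_eventually_0[of I lam i] I i len by (simp add: tendsto_eventually)
  next
    case False
    then have "((\<lambda>z. F_summand u lam mu z I * (\<Prod>i\<in>I. append_zero_factor z (xvar (lam @ [0]) z i)))
                 \<longlongrightarrow> F_limit u lam mu I * (\<Prod>i\<in>I. 1)) (at 1)"
      using I len by (intro tendsto_mult lim tendsto_prod append_zero_factor_xvar_tendsto_1) auto
    then show ?thesis using I len by (simp add: F_summand_append_zero)
  qed
  then show ?thesis unfolding F_limit_def[of u "lam @ [0]"] by (intro tendsto_Lim) auto
qed

lemma V1_append_zero:
  assumes idx: "(lam, mu) \<in> Phi_index m n" and "m \<le> n"
  shows "V1 u (lam @ [0]) (mu @ [0]) q t = V1 u lam mu q t"
proof -
  have idx': "(lam @ [0], mu @ [0]) \<in> Phi_index (Suc m) (Suc n)"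
    using Phi_index_append_zero[OF idx] .
  have len: "length lam = m" using Phi_index_length[OF idx] by simp
  have "V1 u (lam @ [0]) (mu @ [0]) q t = (\<Sum>I\<in>Pow {0..<Suc m}. F_limit u (lam @ [0]) (mu @ [0]) I)"
    using V1_eq_sum_F_limit[OF idx'] \<open>m \<le> n\<close> by simp
  also have "\<dots> = (\<Sum>I\<in>Pow {0..<m}. F_limit u (lam @ [0]) (mu @ [0]) I)"
  proof (rule sum.mono_neutral_right)
    show "\<forall>I\<in>Pow {0..<Suc m} - Pow {0..<m}. F_limit u (lam @ [0]) (mu @ [0]) I = 0"
    proof
      fix I assume "I \<in> Pow {0..<Suc m} - Pow {0..<m}"
      then have "I \<subseteq> {0..<Suc m}" "m \<in> I" by (auto simp: less_Suc_eq)
      then show "F_limit u (lam @ [0]) (mu @ [0]) I = 0"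
        using F_limit_eq_0[OF idx'] \<open>m \<le> n\<close> len by (simp add: nth_append)
    qed
  qed auto
  also have "\<dots> = (\<Sum>I\<in>Pow {0..<m}. F_limit u lam mu I)"
    using F_limit_append_zero[OF assms] by simp
  also have "\<dots> = V1 u lam mu q t"
    using V1_eq_sum_F_limit[OF assms] by simp
  finally show ?thesis .
qed

end

section \<open>Stability of \<open>\<Omega>\<close>\<close>

lemma prod_lessThan_Suc_Suc:
  "(\<Prod>i<Suc m. \<Prod>j<Suc n. f i j) = (\<Prod>i<m. (\<Prod>j<n. f i j) * f i n) * ((\<Prod>j<n. f m j) * f m n)"
  by (simp add: prod.lessThan_Suc)

context generic_qt
begin

lemma Vfun_append_zero:
  "(lam, mu) \<in> Phi_index m n \<Longrightarrow> m \<le> n \<Longrightarrow> Vfun ty (lam @ [0]) (mu @ [0]) q t = Vfun ty lam mu q t"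
  by (cases ty) (simp_all add: Vfun_def V1_append_zero psize_def)

lemma qpoch_q_t_power_nonzero: "qpoch (q * t ^ k) q N \<noteq> 0"
proof -
  have "q * t ^ k * q ^ j \<noteq> 1" for j
    using monomial_eq_1_iff[of "Suc j" k] by (simp add: mult_ac)
  then show ?thesis by (simp add: qpoch_def)
qed

definition omega_entry :: "int \<Rightarrow> nat list \<Rightarrow> nat list \<Rightarrow> nat \<Rightarrow> nat \<Rightarrow> complex" where
  "omega_entry d lam mu i j =
     qpoch_int (q * t powi (int j - int i + d - 1)) q (int (lam ! i) - int (mu ! j)) /
     qpoch_int (q * t powi (int j - int i + d)) q (int (lam ! i) - int (mu ! j))"

lemma qpoch_part_q_t_power:
  "qpoch_part (q * t powi (int (length lam) - 1)) q t lam =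
   (\<Prod>i<length lam. qpoch (q * t ^ (length lam - 1 - i)) q (lam ! i))"
proof -
  have "t powi (int (length lam) - 1) * t powi (- int i) = t ^ (length lam - 1 - i)"
    if "i < length lam" for i
  proof -
    have "t powi (int (length lam) - 1) * t powi (- int i) = t powi (int (length lam) - 1 + - int i)"
      using t_nonzero by (metis power_int_add)
    also have "int (length lam) - 1 + - int i = int (length lam - 1 - i)"
      using that by simp
    finally show ?thesis by (simp only: power_int_of_nat)
  qed
  then show ?thesis unfolding qpoch_part_def by (simp add: mult.assoc)
qed

lemma Omega_eq_omega_entry:
  "Omega ty lam mu q t = Vfun ty lam mu q t * qpoch_part (q * t powi (int (length lam) - 1)) q t lam *
     (\<Prod>i<length lam. \<Prod>j<length mu. omega_entry (int (length lam) - int (length mu)) lam mu i j)"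
  by (simp add: Omega_def omega_entry_def add_diff_eq Let_def)

lemma omega_entry_append_zero:
  "i < length lam \<Longrightarrow> j < length mu \<Longrightarrow> omega_entry d (lam @ [0]) (mu @ [0]) i j = omega_entry d lam mu i j"
  by (simp add: omega_entry_def nth_append)

lemma omega_entry_new_column:
  assumes "length lam = m" "length mu = n" "i < m"
  shows "omega_entry (int m - int n) (lam @ [0]) (mu @ [0]) i n =
         qpoch (q * t ^ (m - 1 - i)) q (lam ! i) / qpoch (q * t ^ (m - i)) q (lam ! i)"
proof -
  have "int n - int i + (int m - int n) - 1 = int (m - 1 - i)"
       "int n - int i + (int m - int n) = int (m - i)"
    using assms by auto
  then show ?thesis
    using assms by (simp add: omega_entry_def nth_append power_int_of_nat del: of_nat_diff)
qed

lemma omega_entry_new_row: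
  assumes "length lam = m" "length mu = n" "j < n"
  shows "omega_entry (int m - int n) (lam @ [0]) (mu @ [0]) m j =
         t ^ (mu ! j) * qpoch (t ^ n * t powi (- int j)) q (mu ! j) /
         qpoch (t ^ (n + 1) * t powi (- int j)) q (mu ! j)"
proof -
  define c where "c = t powi (int j - int n - 1)"
  have "c \<noteq> 0" using t_nonzero by (simp add: c_def)
  have tc: "t * c = t powi (int j - int n)"
    using power_int_add[of t "int j - int n - 1" 1] t_nonzero by (simp add: c_def mult.commute)
  have "t powi (1 + int n) = t * t ^ n"
    by (metis of_nat_Suc power_int_of_nat power_Suc)
  then have inverses: "1 / (t * c) = t ^ n * t powi (- int j)" "1 / c = t ^ (n + 1) * t powi (- int j)"
    using t_nonzero by (simp_all add: c_def power_int_diff power_int_minus field_simps)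
  have "omega_entry (int m - int n) (lam @ [0]) (mu @ [0]) m j =
        qpoch_int (q * c) q (- int (mu ! j)) / qpoch_int (q * (t * c)) q (- int (mu ! j))"
    unfolding tc using assms by (simp add: omega_entry_def nth_append c_def)
  also have "\<dots> = t ^ (mu ! j) * qpoch (t ^ n * t powi (- int j)) q (mu ! j) /
                    qpoch (t ^ (n + 1) * t powi (- int j)) q (mu ! j)"
    unfolding qpoch_int_minus_ratio[OF q_nonzero t_nonzero \<open>c \<noteq> 0\<close>] inverses ..
  finally show ?thesis .
qed

lemma omega_entry_corner:
  "length lam = m \<Longrightarrow> length mu = n \<Longrightarrow> omega_entry d (lam @ [0]) (mu @ [0]) m n = 1"
  by (simp add: omega_entry_def qpoch_int_def nth_append)

lemma Omega_append_zero:
  assumes idx: "(lam, mu) \<in> Phi_index m n" and "m \<le> n"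
  shows "Omega ty (lam @ [0]) (mu @ [0]) q t =
    t ^ psize mu * qpoch_part (t ^ n) q t mu / qpoch_part (t ^ (n + 1)) q t mu * Omega ty lam mu q t"
proof -
  have len: "length lam = m" "length mu = n" using Phi_index_length[OF idx] by auto
  define d where "d = int m - int n"
  define N where "N i = qpoch (q * t ^ (m - 1 - i)) q (lam ! i)" for i
  define D where "D i = qpoch (q * t ^ (m - i)) q (lam ! i)" for i
  define A where "A j = qpoch (t ^ n * t powi (- int j)) q (mu ! j)" for j
  define B where "B j = qpoch (t ^ (n + 1) * t powi (- int j)) q (mu ! j)" for j
  define G where "G = (\<Prod>i<m. \<Prod>j<n. omega_entry d lam mu i j)"
  have old: "Omega ty lam mu q t = Vfun ty lam mu q t * (\<Prod>i<m. N i) * G"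
    by (simp only: Omega_eq_omega_entry qpoch_part_q_t_power) (simp add: N_def G_def d_def len)
  have "qpoch_part (q * t powi (int (length (lam @ [0])) - 1)) q t (lam @ [0]) = (\<Prod>i<m. D i)"
    unfolding qpoch_part_q_t_power by (simp add: prod.lessThan_Suc nth_append len D_def)
  then have new: "Omega ty (lam @ [0]) (mu @ [0]) q t = Vfun ty lam mu q t * (\<Prod>i<m. D i) *
      (\<Prod>i<Suc m. \<Prod>j<Suc n. omega_entry d (lam @ [0]) (mu @ [0]) i j)"
    unfolding Omega_eq_omega_entry Vfun_append_zero[OF assms] by (simp add: d_def len)
  \<comment> \<open>the new column cancels the change of \<open>(q t\<^sup>m\<^sup>-\<^sup>1; q, t)\<^sub>\<lambda>\<close>, the new row produces the new factors\<close>
  have "(\<Prod>i<Suc m. \<Prod>j<Suc n. omega_entry d (lam @ [0]) (mu @ [0]) i j) =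
      (\<Prod>i<m. (\<Prod>j<n. omega_entry d lam mu i j) * (N i / D i)) * (\<Prod>j<n. t ^ (mu ! j) * A j / B j)"
    unfolding prod_lessThan_Suc_Suc d_def using len
    by (simp add: omega_entry_append_zero omega_entry_new_column omega_entry_new_row
        omega_entry_corner N_def D_def A_def B_def)
  also have "\<dots> = G * ((\<Prod>i<m. N i) / (\<Prod>i<m. D i)) * (t ^ psize mu * (\<Prod>j<n. A j) / (\<Prod>j<n. B j))"
    by (simp add: G_def prod.distrib prod_dividef power_sum psize_eq_sum len)
  moreover have "(\<Prod>i<m. D i) \<noteq> 0"
    by (simp add: D_def qpoch_q_t_power_nonzero)
  moreover have "qpoch_part (t ^ n) q t mu = (\<Prod>j<n. A j)" "qpoch_part (t ^ (n + 1)) q t mu = (\<Prod>j<n. B j)"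
    by (simp_all add: qpoch_part_def A_def B_def len)
  ultimately show ?thesis
    unfolding old new by (simp add: field_simps)
qed

end

lemma Phi_append_zero_eq:
  "Phi ty a b q t (xs @ [0]) (ys @ [0]) =
   (\<Prod>i<length xs. qpoch_inf (xs ! i) q / qpoch_inf (xs ! i * t powi (int (length xs) - int (length ys) - 1)) q) *
   infsum (Phi_term ty a b q t (xs @ [0]) (ys @ [0])) (Phi_index (Suc (length xs)) (Suc (length ys)))"
proof -
  have "(\<Prod>i<length xs. qpoch_inf ((xs @ [0]) ! i) q / qpoch_inf ((xs @ [0]) ! i * c) q) =
        (\<Prod>i<length xs. qpoch_inf (xs ! i) q / qpoch_inf (xs ! i * c) q)" for c
    by (intro prod.cong) (auto simp: nth_append)
  then show ?thesis by (simp add: Phi_def)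
qed

lemma Phi_term_append_zero_eq_0:
  assumes "length xs = m" "length ys = n" "lam ! m \<noteq> 0 \<or> mu ! n \<noteq> 0"
  shows "Phi_term ty a b q t (xs @ [0]) (ys @ [0]) (lam, mu) = 0"
  using assms macP_append_zero_eq_0 by (auto simp: Phi_term_def)

context generic_qt
begin

lemma Phi_term_append_zero:
  assumes idx: "(lam, mu) \<in> Phi_index m n" and "m \<le> n" and xs: "length xs = m" and ys: "length ys = n"
  shows "Phi_term ty a b q t (xs @ [0]) (ys @ [0]) (lam @ [0], mu @ [0]) =
         Phi_term ty (t ^ n # a) (t ^ (n + 1) # b) q t xs (map (\<lambda>v. t * v) ys) (lam, mu)"
proof -
  have len: "length lam = m" "length mu = n" using Phi_index_length[OF idx] by auto
  have "is_part (Suc m) (lam @ [0])" "is_part (Suc n) (mu @ [0])"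
    using Phi_index_append_zero[OF idx] by (auto simp: Phi_index_def)
  then have "macP (lam @ [0]) q t (xs @ [0]) = macP lam q t xs"
            "macP (mu @ [0]) q t (ys @ [0]) = macP mu q t ys"
    using macP_append_zero xs ys len by auto
  moreover have "macP mu q t (map (\<lambda>v. t * v) ys) = t ^ psize mu * macP mu q t ys"
    by (rule macP_map_mult)
  ultimately show ?thesis
    using Omega_append_zero[OF idx \<open>m \<le> n\<close>, of ty]
    by (simp add: Phi_term_def nfun_append_zero cprime_append_zero qpoch_part_append_zero
        prod.lessThan_Suc_shift ys del: prod.lessThan_Suc) (simp add: divide_inverse mult_ac)
qed

lemma infsum_Phi_term_append_zero:
  assumes "length xs \<le> length ys"
  shows "infsum (Phi_term ty a b q t (xs @ [0]) (ys @ [0])) (Phi_index (Suc (length xs)) (Suc (length ys))) =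
         infsum (Phi_term ty (t ^ length ys # a) (t ^ (length ys + 1) # b) q t xs (map (\<lambda>v. t * v) ys))
           (Phi_index (length xs) (length ys))"
    (is "infsum ?f (Phi_index (Suc ?m) (Suc ?n)) = infsum ?g (Phi_index ?m ?n)")
proof -
  define pad where "pad p = (fst p @ [0], snd p @ [0])" for p :: "nat list \<times> nat list"
  have "infsum ?f (Phi_index (Suc ?m) (Suc ?n)) = infsum ?f (pad ` Phi_index ?m ?n)"
  proof (rule infsum_cong_neutral)
    fix p assume p: "p \<in> Phi_index (Suc ?m) (Suc ?n) - pad ` Phi_index ?m ?n"
    obtain lam mu where p_eq: "p = (lam, mu)" by fastforce
    have idx: "(lam, mu) \<in> Phi_index (Suc ?m) (Suc ?n)" using p by (simp add: p_eq)
    have "lam ! ?m \<noteq> 0 \<or> mu ! ?n \<noteq> 0"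
    proof (rule ccontr)
      assume "\<not> (lam ! ?m \<noteq> 0 \<or> mu ! ?n \<noteq> 0)"
      then have "(butlast lam, butlast mu) \<in> Phi_index ?m ?n" "p = pad (butlast lam, butlast mu)"
        using Phi_index_Suc_butlast[OF idx assms] by (auto simp: p_eq pad_def)
      then show False using p by blast
    qed
    then show "?f p = 0" unfolding p_eq by (rule Phi_term_append_zero_eq_0[OF refl refl])
  qed (use Phi_index_append_zero in \<open>auto simp: pad_def\<close>)
  also have "\<dots> = infsum (?f \<circ> pad) (Phi_index ?m ?n)"
    by (rule infsum_reindex) (auto simp: inj_on_def pad_def)
  also have "\<dots> = infsum ?g (Phi_index ?m ?n)"
    using Phi_term_append_zero[OF _ assms refl refl] by (intro infsum_cong) (auto simp: pad_def)
  finally show ?thesis .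
qed

end

theorem lemma5p5:
  fixes ty :: vtype and a b :: "complex list" and q t :: complex
    and xs ys :: "complex list"
  assumes mn: "length xs \<le> length ys"
    and r: "length a = length b + 1"
    and q0: "q \<noteq> 0" and t0: "t \<noteq> 0" and q1: "norm q < 1"
    and generic: "\<forall>i j :: int. q powi i * t powi j = 1 \<longrightarrow> i = 0 \<and> j = 0"
    and bwd: "\<forall>c \<in> set b. \<forall>k i :: nat. c * q ^ k * t powi (- int i) \<noteq> 1"
    and convL: "Phi_term ty a b q t (xs @ [0]) (ys @ [0]) summable_on
                  Phi_index (length xs + 1) (length ys + 1)"
    and convR: "Phi_term ty (t ^ length ys # a) (t ^ (length ys + 1) # b) q t xs (map (\<lambda>v. t * v) ys)
                  summable_on Phi_index (length xs) (length ys)"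
  shows "Phi ty a b q t (xs @ [0]) (ys @ [0]) =
         Phi ty (t ^ length ys # a) (t ^ (length ys + 1) # b) q t xs (map (\<lambda>v. t * v) ys)"
proof -
  interpret generic_qt q t
    using q0 t0 generic by unfold_locales
  \<comment> \<open>the identity holds term by term\<close>
  show ?thesis
    unfolding Phi_append_zero_eq infsum_Phi_term_append_zero[OF mn]
    by (simp add: Phi_def Let_def)
qed

end
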